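(* In the storage model of the context, let $(\alpha_{ij})$ be a positive solution of the linear system \[ \sum_{j=1}^{\kappa_i}\alpha_{ij}=\lambda_i\ (i=1,\dots,\mathcal K),\qquad \sum_{i=1}^{\mathcal K}\sum_{j=1}^{\kappa_i}\alpha_{ij}\,\delta_{\ell,s^i_j}=\tfrac1n\ (\ell=1,\dots,n), \] and let the embedded load chain $X^e(m)$ be constructed using the Join the Shortest Queue routing policy. Then for every $x\in\mathbb N^n$, \[ \mathbf E[f(X^e(m+1))-f(X^e(m))\mid X^e(m)=x]=-2\sum_{i=1}^{\mathcal K}\sum_{j\ne j_{\min}^{(i)}}\alpha_{ij}\bigl(x_{s^i_j}-x_{s^i_{j_{\min}}(x)}\bigr)+1-\frac1n, \] where $f(y)=\sum_{l=1}^n\bigl(y_l-\frac1n\sum_{k=1}^ny_k\bigr)^2$ and $j^{(i)}_{\min}$ is the index with $s^i_{j^{(i)}_{\min}}=s^i_{j_{\min}}(x)$.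
   Context: Storage model: $n$ nodes, non-empty neighborhoods $S_1,\dots,S_{\mathcal K}\subset\{1,\dots,n\}$ covering $\{1,\dots,n\}$, $\kappa_i=|S_i|$, $S_i=\{s^i_1,\dots,s^i_{\kappa_i}\}$ a fixed enumeration. Items arrive at $S_i$ as independent Poisson processes with rates $\lambda_i>0$, $\sum_i\lambda_i=1$. $X^e(m)\in\mathbb N^n$ is the vector of node loads after the $m$-th arrival. For $x\in\mathbb N^n$, $s^i_{j_{\min}}(x)$ is the first node of $S_i$ (in the enumeration) at which $x$ is minimal over $S_i$. Join the Shortest Queue (JSQ) routing policy: an item arriving at $S_i$ when the configuration is $x$ is stored at node $s^i_{j_{\min}}(x)$. $\delta_{\ell,m}$ is the Kronecker delta. *)

theory Defs
  imports "HOL-Probability.Probability"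
begin

text \<open>Nodes are 0,...,n-1; neighbourhoods are indexed 0,...,K-1; the neighbourhood
  S i is given by its fixed enumeration, a list of nodes of length kappa_i = length (S i).
  Configurations are load vectors x :: nat => nat (only the components below n matter).\<close>

definition jmin :: "nat list \<Rightarrow> (nat \<Rightarrow> nat) \<Rightarrow> nat" where
  "jmin Sl x = (LEAST j. j < length Sl \<and> (\<forall>k < length Sl. x (Sl ! j) \<le> x (Sl ! k)))"

text \<open>Distribution of the neighbourhood of the next arrival (superposition of
  independent Poisson processes with rates lambda i, sum 1).\<close>
definition arrival_pmf :: "nat \<Rightarrow> (nat \<Rightarrow> real) \<Rightarrow> nat pmf" where
  "arrival_pmf K lam = embed_pmf (\<lambda>i. if i < K then lam i else 0)"

definition jsq_next :: "(nat \<Rightarrow> nat list) \<Rightarrow> (nat \<Rightarrow> nat) \<Rightarrow> nat \<Rightarrow> nat \<Rightarrow> nat" where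
  "jsq_next S x i = (let v = S i ! jmin (S i) x in x(v := x v + 1))"

text \<open>Transition kernel of the embedded load chain X^e under JSQ:
  law of X^e(m+1) given X^e(m) = x.\<close>
definition jsq_step :: "nat \<Rightarrow> (nat \<Rightarrow> real) \<Rightarrow> (nat \<Rightarrow> nat list) \<Rightarrow> (nat \<Rightarrow> nat) \<Rightarrow> (nat \<Rightarrow> nat) pmf" where
  "jsq_step K lam S x = map_pmf (jsq_next S x) (arrival_pmf K lam)"

definition fdev :: "nat \<Rightarrow> (nat \<Rightarrow> nat) \<Rightarrow> real" where
  "fdev n y = (\<Sum>l<n. (real (y l) - (1 / real n) * (\<Sum>k<n. real (y k)))\<^sup>2)"

end

theory Submission
  imports Defs
begin

text \<open>Since \<open>f(y) = \<Sum>\<^sub>l y\<^sub>l\<^sup>2 - (\<Sum>\<^sub>l y\<^sub>l)\<^sup>2/n\<close>, storing one item at node \<open>v\<close> changes \<open>f\<close> by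
  \<open>2x\<^sub>v + 1 - (2\<Sum>\<^sub>l x\<^sub>l + 1)/n\<close>. Under JSQ an arrival at \<open>S\<^sub>i\<close>, which has probability \<open>\<lambda>\<^sub>i\<close>,
  goes to the least loaded node \<open>v\<^sub>i\<close> of \<open>S\<^sub>i\<close>, so the drift is
  \<open>2\<Sum>\<^sub>i \<lambda>\<^sub>i x(v\<^sub>i) + 1 - (2\<Sum>\<^sub>l x\<^sub>l + 1)/n\<close>. By the row equations \<open>\<lambda>\<^sub>i x(v\<^sub>i) = \<Sum>\<^sub>j \<alpha>\<^sub>i\<^sub>j x(v\<^sub>i)\<close>,
  and by the column equations \<open>\<Sum>\<^sub>i\<^sub>,\<^sub>j \<alpha>\<^sub>i\<^sub>j x(s\<^sup>i\<^sub>j) = \<Sum>\<^sub>l x\<^sub>l/n\<close>; subtracting the two gives the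
  claimed drift.\<close>

lemma pmf_arrival_pmf:
  assumes "\<And>i. i < K \<Longrightarrow> 0 \<le> lam i" and "(\<Sum>i<K. lam i) = 1"
  shows "pmf (arrival_pmf K lam) i = (if i < K then lam i else 0)"
  unfolding arrival_pmf_def
proof (rule pmf_embed_pmf)
  show "\<And>i. 0 \<le> (if i < K then lam i else 0)" using assms(1) by simp
  have "(\<integral>\<^sup>+ i. ennreal (if i < K then lam i else 0) \<partial>count_space UNIV)
        = (\<Sum>i<K. ennreal (if i < K then lam i else 0))"
    by (rule nn_integral_count_space') auto
  also have "\<dots> = ennreal (\<Sum>i<K. lam i)"
    using assms(1) by (subst sum_ennreal[symmetric]) auto
  finally show "(\<integral>\<^sup>+ i. ennreal (if i < K then lam i else 0) \<partial>count_space UNIV) = 1"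
    using assms(2) by simp
qed

lemma expectation_jsq_step:
  fixes g :: "(nat \<Rightarrow> nat) \<Rightarrow> real"
  assumes "\<And>i. i < K \<Longrightarrow> 0 \<le> lam i" and "(\<Sum>i<K. lam i) = 1"
  shows "measure_pmf.expectation (jsq_step K lam S x) g = (\<Sum>i<K. lam i * g (jsq_next S x i))"
proof -
  have "measure_pmf.expectation (jsq_step K lam S x) g
      = measure_pmf.expectation (arrival_pmf K lam) (\<lambda>i. g (jsq_next S x i))"
    unfolding jsq_step_def by simp
  also have "\<dots> = (\<Sum>i<K. g (jsq_next S x i) * pmf (arrival_pmf K lam) i)"
    by (rule integral_measure_pmf_real)
      (auto simp: set_pmf_eq pmf_arrival_pmf[OF assms] split: if_splits)
  finally show ?thesis by (simp add: pmf_arrival_pmf[OF assms] mult.commute)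
qed

lemma jmin_minimal:
  assumes "Sl \<noteq> []"
  shows "jmin Sl x < length Sl \<and> (\<forall>k < length Sl. x (Sl ! jmin Sl x) \<le> x (Sl ! k))"
proof -
  let ?loads = "(\<lambda>j. x (Sl ! j)) ` {..<length Sl}"
  have "Min ?loads \<in> ?loads" using assms by (intro Min_in) auto
  then obtain j where "j < length Sl" "x (Sl ! j) = Min ?loads" by auto
  then have "j < length Sl \<and> (\<forall>k < length Sl. x (Sl ! j) \<le> x (Sl ! k))" by auto
  then show ?thesis unfolding jmin_def by (rule LeastI)
qed

lemma fdev_eq_sum_squares:
  assumes "n > 0"
  shows "fdev n y = (\<Sum>l<n. real (y l)^2) - (\<Sum>l<n. real (y l))^2 / real n"
proof -
  let ?T = "\<Sum>l<n. real (y l)"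
  have "fdev n y = (\<Sum>l<n. real (y l)^2 - 2 * (?T / real n) * real (y l) + (?T / real n)^2)"
    unfolding fdev_def by (intro sum.cong) (auto simp: power2_eq_square algebra_simps)
  also have "\<dots> = (\<Sum>l<n. real (y l)^2) - 2 * (?T / real n) * ?T + real n * (?T / real n)^2"
    by (simp add: sum.distrib sum_subtractf sum_distrib_left)
  also have "\<dots> = (\<Sum>l<n. real (y l)^2) - ?T^2 / real n"
    using assms by (simp add: power2_eq_square field_simps)
  finally show ?thesis .
qed

lemma sum_lessThan_fun_upd:
  fixes y :: "nat \<Rightarrow> 'a" and g :: "'a \<Rightarrow> 'b::ab_group_add"
  assumes "v < n"
  shows "(\<Sum>l<n. g ((y(v := a)) l)) = (\<Sum>l<n. g (y l)) - g (y v) + g a"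
proof -
  have "(\<Sum>l<n. g ((y(v := a)) l)) = g a + (\<Sum>l\<in>{..<n} - {v}. g (y l))"
    using assms by (subst sum.remove[of _ v]) (auto intro!: sum.cong)
  also have "(\<Sum>l\<in>{..<n} - {v}. g (y l)) = (\<Sum>l<n. g (y l)) - g (y v)"
    using assms by (subst sum_diff1) auto
  finally show ?thesis by (simp add: algebra_simps)
qed

lemma fdev_increment:
  assumes "v < n"
  shows "fdev n (y(v := y v + 1)) - fdev n y
       = 2 * real (y v) + 1 - (2 * (\<Sum>l<n. real (y l)) + 1) / real n"
proof -
  have n: "n > 0" using assms by simp
  have squares: "(\<Sum>l<n. real ((y(v := y v + 1)) l)^2)
      = (\<Sum>l<n. real (y l)^2) - real (y v)^2 + real (y v + 1)^2"
    using sum_lessThan_fun_upd[OF assms, of "\<lambda>a. real a ^ 2"] by simp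
  have total: "(\<Sum>l<n. real ((y(v := y v + 1)) l)) = (\<Sum>l<n. real (y l)) + 1"
    using sum_lessThan_fun_upd[OF assms, of "\<lambda>a. real a"] by simp
  show ?thesis unfolding fdev_eq_sum_squares[OF n] squares total
    using n by (simp add: power2_eq_square field_simps)
qed

lemma sum_weighted_excess_over:
  fixes a b :: "'a \<Rightarrow> 'b::comm_ring"
  assumes "finite A"
  shows "(\<Sum>j\<in>A - {m}. a j * (b j - b m)) = (\<Sum>j\<in>A. a j * b j) - (\<Sum>j\<in>A. a j) * b m"
proof -
  have "(\<Sum>j\<in>A - {m}. a j * (b j - b m)) = (\<Sum>j\<in>A. a j * (b j - b m))"
    using assms by (intro sum.mono_neutral_left) auto
  then show ?thesis by (simp add: right_diff_distrib sum_subtractf sum_distrib_right)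
qed

lemma sum_sum_by_column:
  fixes w :: "'i \<Rightarrow> 'j \<Rightarrow> 'b::comm_ring_1" and g :: "nat \<Rightarrow> 'b"
  assumes "finite I" "\<And>i. finite (J i)"
    and "\<And>i j. i \<in> I \<Longrightarrow> j \<in> J i \<Longrightarrow> s i j < n"
    and "\<And>l. l < n \<Longrightarrow> (\<Sum>i\<in>I. \<Sum>j\<in>J i. w i j * (if l = s i j then 1 else 0)) = c"
  shows "(\<Sum>i\<in>I. \<Sum>j\<in>J i. w i j * g (s i j)) = c * (\<Sum>l<n. g l)"
proof -
  have "(\<Sum>i\<in>I. \<Sum>j\<in>J i. w i j * g (s i j))
      = (\<Sum>i\<in>I. \<Sum>j\<in>J i. \<Sum>l<n. w i j * (if l = s i j then 1 else 0) * g l)"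
    using assms(3) by (intro sum.cong refl) (simp add: if_distrib[of "\<lambda>c. _ * c * _"] sum.delta cong: if_cong)
  also have "\<dots> = (\<Sum>l<n. (\<Sum>i\<in>I. \<Sum>j\<in>J i. w i j * (if l = s i j then 1 else 0)) * g l)"
    by (simp add: sum_distrib_right sum.swap[of _ "{..<n}"])
  also have "\<dots> = c * (\<Sum>l<n. g l)"
    by (simp add: assms(4) sum_distrib_left)
  finally show ?thesis .
qed

lemma expectation_jsq_step_fdev_diff:
  assumes S_ne: "\<And>i. i < K \<Longrightarrow> S i \<noteq> []"
    and S_sub: "\<And>i. i < K \<Longrightarrow> set (S i) \<subseteq> {..<n}"
    and lam_nonneg: "\<And>i. i < K \<Longrightarrow> 0 \<le> lam i"
    and lam_sum: "(\<Sum>i<K. lam i) = 1"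
  shows "measure_pmf.expectation (jsq_step K lam S x) (\<lambda>y. fdev n y - fdev n x)
       = 2 * (\<Sum>i<K. lam i * real (x (S i ! jmin (S i) x))) + 1 - (2 * (\<Sum>l<n. real (x l)) + 1) / real n"
proof -
  define v where "v i = S i ! jmin (S i) x" for i
  define T where "T = (\<Sum>l<n. real (x l))"
  have v_less: "v i < n" if "i < K" for i
    using jmin_minimal[OF S_ne[OF that]] S_sub[OF that] unfolding v_def by (meson lessThan_iff nth_mem subsetD)
  have increment: "fdev n (jsq_next S x i) - fdev n x = 2 * real (x (v i)) + 1 - (2 * T + 1) / real n"
    if "i < K" for i
    unfolding jsq_next_def Let_def T_def by (fold v_def) (rule fdev_increment[OF v_less[OF that]])
  have "measure_pmf.expectation (jsq_step K lam S x) (\<lambda>y. fdev n y - fdev n x)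
      = (\<Sum>i<K. lam i * (fdev n (jsq_next S x i) - fdev n x))"
    using lam_nonneg lam_sum by (rule expectation_jsq_step)
  also have "\<dots> = (\<Sum>i<K. lam i * (2 * real (x (v i)) + 1 - (2 * T + 1) / real n))"
    by (simp add: increment)
  also have "\<dots> = (\<Sum>i<K. 2 * (lam i * real (x (v i))) + lam i * (1 - (2 * T + 1) / real n))"
    by (simp add: algebra_simps)
  also have "\<dots> = 2 * (\<Sum>i<K. lam i * real (x (v i))) + 1 - (2 * T + 1) / real n"
    using lam_sum by (simp add: sum.distrib flip: sum_distrib_left sum_distrib_right)
  finally show ?thesis unfolding v_def T_def .
qed

lemma sum_alpha_excess_over_node:
  fixes \<alpha> :: "nat \<Rightarrow> nat \<Rightarrow> real" and m :: "nat \<Rightarrow> nat"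
  assumes S_sub: "\<And>i. i < K \<Longrightarrow> set (S i) \<subseteq> {..<n}"
    and alpha_row: "\<And>i. i < K \<Longrightarrow> (\<Sum>j<length (S i). \<alpha> i j) = lam i"
    and alpha_col: "\<And>l. l < n \<Longrightarrow>
        (\<Sum>i<K. \<Sum>j<length (S i). \<alpha> i j * (if l = S i ! j then 1 else 0)) = 1 / real n"
  shows "(\<Sum>i<K. \<Sum>j\<in>{..<length (S i)} - {m i}. \<alpha> i j * (real (x (S i ! j)) - real (x (S i ! m i))))
       = (\<Sum>l<n. real (x l)) / real n - (\<Sum>i<K. lam i * real (x (S i ! m i)))"
proof -
  have rows: "(\<Sum>i<K. \<Sum>j\<in>{..<length (S i)} - {m i}. \<alpha> i j * (real (x (S i ! j)) - real (x (S i ! m i))))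
      = (\<Sum>i<K. (\<Sum>j<length (S i). \<alpha> i j * real (x (S i ! j))) - lam i * real (x (S i ! m i)))"
    using sum_weighted_excess_over[of _ "\<alpha> _" "\<lambda>j. real (x (S _ ! j))"]
    by (intro sum.cong refl) (simp add: alpha_row)
  have columns: "(\<Sum>i<K. \<Sum>j<length (S i). \<alpha> i j * real (x (S i ! j))) = (1 / real n) * (\<Sum>l<n. real (x l))"
    using S_sub alpha_col by (intro sum_sum_by_column) (auto dest!: nth_mem)
  show ?thesis unfolding rows by (simp add: sum_subtractf columns)
qed

theorem lemma3p2:
  fixes n K :: nat and S :: "nat \<Rightarrow> nat list" and lam :: "nat \<Rightarrow> real"
    and \<alpha> :: "nat \<Rightarrow> nat \<Rightarrow> real" and x :: "nat \<Rightarrow> nat"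
  assumes S_ne: "\<And>i. i < K \<Longrightarrow> S i \<noteq> []"
    and S_dist: "\<And>i. i < K \<Longrightarrow> distinct (S i)"
    and S_sub: "\<And>i. i < K \<Longrightarrow> set (S i) \<subseteq> {..<n}"
    and S_cover: "(\<Union>i<K. set (S i)) = {..<n}"
    and lam_pos: "\<And>i. i < K \<Longrightarrow> lam i > 0"
    and lam_sum: "(\<Sum>i<K. lam i) = 1"
    and alpha_pos: "\<And>i j. i < K \<Longrightarrow> j < length (S i) \<Longrightarrow> \<alpha> i j > 0"
    and alpha_row: "\<And>i. i < K \<Longrightarrow> (\<Sum>j<length (S i). \<alpha> i j) = lam i"
    and alpha_col: "\<And>l. l < n \<Longrightarrow>
        (\<Sum>i<K. \<Sum>j<length (S i). \<alpha> i j * (if l = S i ! j then 1 else 0)) = 1 / real n"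
  shows "measure_pmf.expectation (jsq_step K lam S x) (\<lambda>y. fdev n y - fdev n x)
       = - 2 * (\<Sum>i<K. \<Sum>j\<in>{..<length (S i)} - {jmin (S i) x}.
                  \<alpha> i j * (real (x (S i ! j)) - real (x (S i ! jmin (S i) x))))
         + 1 - 1 / real n"
proof -
  have lam_nonneg: "\<And>i. i < K \<Longrightarrow> 0 \<le> lam i" using lam_pos by (simp add: less_imp_le)
  have "K > 0" using lam_sum by (cases K) auto
  then have "n > 0" using S_ne[of 0] S_sub[of 0] by (auto simp: neq_Nil_conv)
  then show ?thesis
    using expectation_jsq_step_fdev_diff[where S = S and x = x, OF S_ne S_sub lam_nonneg lam_sum]
      sum_alpha_excess_over_node[where S = S and x = x and m = "\<lambda>i. jmin (S i) x",
        OF S_sub alpha_row alpha_col]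
    by (simp add: field_simps)
qed

end
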